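(* For every graph $G=(V,E)$, every edge ordering, and every integer $f\ge 1$, the output $H$ of the algorithm $\mathsf{FTGreedyMFDCertificate}(G,f)$ is an $f$-MFD connectivity certificate of $G$.
   Context: For $F\subseteq V\cup E$, $G-F$ is obtained by deleting the vertices of $F\cap V$ (with incident edges) and the edges of $F\cap E$; $F$ damages an edge $e$ if $e$ is not an edge of $G-F$. For $v\in V$ let $\deg_G(v,F)=|\{u\in N_G(v): u\in F\text{ or }\{u,v\}\in F\}|$ and $\deg_G(F)=\max_{v\in V\setminus F}\deg_G(v,F)$. The algorithm $\mathsf{FTGreedyMFDCertificate}(G,f)$, given the edges ordered $e_1,\dots,e_m$ with $e_i=\{u_i,v_i\}$: start with $H=(V,\emptyset)$; for $i=1,\dots,m$, if there exists $F\subseteq V\cup E$ with $\deg_G(F)\le f$ that does not damage $e_i$ such that $u_i$ and $v_i$ are disconnected in $H-F$, add $e_i$ to $H$; return $H$. A subgraph $H\subseteq G$ is an $f$-MFD connectivity certificate of $G$ if for every $F\subseteq V\cup E$ with $\deg_G(F)\le f$, $G-F$ and $H-F$ have the same connected components. *)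

theory Defs
  imports Main
begin

definition graph :: "'a set \<Rightarrow> 'a set set \<Rightarrow> bool" where
  "graph V E \<longleftrightarrow> finite V \<and> (\<forall>e\<in>E. \<exists>u v. u \<noteq> v \<and> u \<in> V \<and> v \<in> V \<and> e = {u, v})"

text \<open>A fault set F \<subseteq> V \<union> E is represented as a pair (FV, FE) with FV \<subseteq> V and FE \<subseteq> E.\<close>
definition fault_set :: "'a set \<Rightarrow> 'a set set \<Rightarrow> 'a set \<times> 'a set set \<Rightarrow> bool" where
  "fault_set V E F \<longleftrightarrow> fst F \<subseteq> V \<and> snd F \<subseteq> E"

text \<open>G - F: delete the vertices of F (with incident edges) and the edges of F.\<close>
definition del_verts :: "'a set \<Rightarrow> 'a set \<times> 'a set set \<Rightarrow> 'a set" where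
  "del_verts V F = V - fst F"

definition del_edges :: "'a set set \<Rightarrow> 'a set \<times> 'a set set \<Rightarrow> 'a set set" where
  "del_edges E F = {e \<in> E. e \<inter> fst F = {} \<and> e \<notin> snd F}"

definition damages :: "'a set set \<Rightarrow> 'a set \<times> 'a set set \<Rightarrow> 'a set \<Rightarrow> bool" where
  "damages E F e \<longleftrightarrow> e \<notin> del_edges E F"

definition nbrs :: "'a set set \<Rightarrow> 'a \<Rightarrow> 'a set" where
  "nbrs E v = {u. {u, v} \<in> E}"

definition vdeg :: "'a set set \<Rightarrow> 'a \<Rightarrow> 'a set \<times> 'a set set \<Rightarrow> nat" where
  "vdeg E v F = card {u \<in> nbrs E v. u \<in> fst F \<or> {u, v} \<in> snd F}"

definition fdeg :: "'a set \<Rightarrow> 'a set set \<Rightarrow> 'a set \<times> 'a set set \<Rightarrow> nat" where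
  "fdeg V E F = Max (insert 0 ((\<lambda>v. vdeg E v F) ` (V - fst F)))"

definition connected_in :: "'a set \<Rightarrow> 'a set set \<Rightarrow> 'a \<Rightarrow> 'a \<Rightarrow> bool" where
  "connected_in V E u v \<longleftrightarrow> u \<in> V \<and> (u, v) \<in> {(x, y). {x, y} \<in> E}\<^sup>*"

definition greedy_step :: "'a set \<Rightarrow> 'a set set \<Rightarrow> nat \<Rightarrow> 'a set set \<Rightarrow> 'a set \<Rightarrow> 'a set set" where
  "greedy_step V E f H e =
     (if \<exists>F u v. e = {u, v} \<and> fault_set V E F \<and> fdeg V E F \<le> f \<and> \<not> damages E F e \<and>
                 \<not> connected_in (del_verts V F) (del_edges H F) u v
      then insert e H else H)"

definition ft_greedy_mfd_certificate :: "'a set \<Rightarrow> 'a set set \<Rightarrow> nat \<Rightarrow> 'a set list \<Rightarrow> 'a set set" where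
  "ft_greedy_mfd_certificate V E f es = foldl (greedy_step V E f) {} es"

definition mfd_certificate :: "'a set \<Rightarrow> 'a set set \<Rightarrow> 'a set set \<Rightarrow> nat \<Rightarrow> bool" where
  "mfd_certificate V E EH f \<longleftrightarrow> EH \<subseteq> E \<and>
     (\<forall>F. fault_set V E F \<and> fdeg V E F \<le> f \<longrightarrow>
        connected_in (del_verts V F) (del_edges E F) = connected_in (del_verts V F) (del_edges EH F))"

end

theory Submission
  imports Defs
begin

text \<open>The greedy step adds an edge exactly when it is not yet covered, i.e. when some
admissible fault set spares it but separates its endpoints in the current H - F. Hence
every edge is covered right after it is processed, and coverage survives the later growth
of H. Once all edges of G are covered, each surviving edge of G - F can be replaced by a
path in H - F, so G - F and H - F have the same reachability relation.\<close>

definition covered :: "'a set \<Rightarrow> 'a set set \<Rightarrow> nat \<Rightarrow> 'a set set \<Rightarrow> 'a set \<Rightarrow> bool" where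
  "covered V E f H e \<longleftrightarrow> (\<forall>F u v. e = {u, v} \<and> fault_set V E F \<and> fdeg V E F \<le> f \<and>
      \<not> damages E F e \<longrightarrow> connected_in (del_verts V F) (del_edges H F) u v)"

lemma greedy_step_eq: "greedy_step V E f H e = (if covered V E f H e then H else insert e H)"
  unfolding greedy_step_def covered_def by auto

lemma connected_in_mono:
  assumes "H \<subseteq> H'" and "connected_in W (del_edges H F) u v"
  shows "connected_in W (del_edges H' F) u v"
proof -
  have "{(x, y). {x, y} \<in> del_edges H F} \<subseteq> {(x, y). {x, y} \<in> del_edges H' F}"
    using assms(1) by (auto simp: del_edges_def)
  then show ?thesis
    using assms(2) rtrancl_mono unfolding connected_in_def by blast
qed

lemma covered_mono:
  assumes "H \<subseteq> H'" and "covered V E f H e"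
  shows "covered V E f H' e"
  unfolding covered_def
proof (intro allI impI)
  fix F u v
  assume "e = {u, v} \<and> fault_set V E F \<and> fdeg V E F \<le> f \<and> \<not> damages E F e"
  then have "connected_in (del_verts V F) (del_edges H F) u v"
    using assms(2) unfolding covered_def by blast
  then show "connected_in (del_verts V F) (del_edges H' F) u v"
    using assms(1) by (rule connected_in_mono[rotated])
qed

lemma covered_insert_self:
  assumes "graph V E"
  shows "covered V E f (insert e H) e"
  unfolding covered_def
proof (intro allI impI)
  fix F u v
  assume "e = {u, v} \<and> fault_set V E F \<and> fdeg V E F \<le> f \<and> \<not> damages E F e"
  then have e: "e = {u, v}" "e \<in> E" "e \<inter> fst F = {}" "e \<notin> snd F"
    by (auto simp: damages_def del_edges_def)
  have "e \<subseteq> V"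
    using assms e(2) unfolding graph_def by fastforce
  then have "u \<in> del_verts V F"
    using e(1,3) by (auto simp: del_verts_def)
  moreover have "{u, v} \<in> del_edges (insert e H) F"
    using e by (auto simp: del_edges_def)
  ultimately show "connected_in (del_verts V F) (del_edges (insert e H) F) u v"
    by (auto simp: connected_in_def)
qed

lemma covered_greedy_step: "graph V E \<Longrightarrow> covered V E f (greedy_step V E f H e) e"
  by (simp add: greedy_step_eq covered_insert_self)

lemma greedy_step_subset_self: "H \<subseteq> greedy_step V E f H e"
  by (auto simp: greedy_step_eq)

lemma foldl_greedy_step_subset_self: "H \<subseteq> foldl (greedy_step V E f) H es"
proof (induction es arbitrary: H)
  case (Cons e es)
  then show ?case
    using greedy_step_subset_self[of H V E f e] by (metis foldl_Cons order_trans)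
qed simp

lemma foldl_greedy_step_subset:
  "H \<subseteq> E \<Longrightarrow> set es \<subseteq> E \<Longrightarrow> foldl (greedy_step V E f) H es \<subseteq> E"
  by (induction es arbitrary: H) (auto simp: greedy_step_eq)

lemma covered_foldl_greedy_step:
  assumes "graph V E" and "e \<in> set es"
  shows "covered V E f (foldl (greedy_step V E f) H es) e"
  using assms(2)
proof (induction es arbitrary: H)
  case (Cons a es)
  show ?case
  proof (cases "e = a")
    case True
    then show ?thesis
      using covered_mono[OF foldl_greedy_step_subset_self covered_greedy_step[OF assms(1)]]
      by simp
  next
    case False
    then show ?thesis
      using Cons by simp
  qed
qed simp

lemma mfd_certificate_if_covered:
  assumes "EH \<subseteq> E" and covered: "\<And>e. e \<in> E \<Longrightarrow> covered V E f EH e"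
  shows "mfd_certificate V E EH f"
  unfolding mfd_certificate_def
proof (intro conjI allI impI ext)
  fix F u v
  assume F: "fault_set V E F \<and> fdeg V E F \<le> f"
  let ?RE = "{(x, y). {x, y} \<in> del_edges E F}"
  let ?RH = "{(x, y). {x, y} \<in> del_edges EH F}"
  have "?RH \<subseteq> ?RE"
    using assms(1) by (auto simp: del_edges_def)
  moreover have "?RE \<subseteq> ?RH\<^sup>*"
  proof clarify
    fix x y
    assume "{x, y} \<in> del_edges E F"
    then have "{x, y} \<in> E" and "\<not> damages E F {x, y}"
      by (auto simp: damages_def del_edges_def)
    then have "connected_in (del_verts V F) (del_edges EH F) x y"
      using covered F unfolding covered_def by blast
    then show "(x, y) \<in> ?RH\<^sup>*"
      by (simp add: connected_in_def)
  qed
  ultimately have "?RE\<^sup>* = ?RH\<^sup>*"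
    by (simp add: rtrancl_mono rtrancl_subset_rtrancl subset_antisym)
  then show "connected_in (del_verts V F) (del_edges E F) u v =
             connected_in (del_verts V F) (del_edges EH F) u v"
    unfolding connected_in_def by simp
qed (fact assms(1))

theorem mainTheorem5:
  fixes V :: "'a set" and E :: "'a set set" and es :: "'a set list" and f :: nat
  assumes "graph V E"
    and "distinct es" and "set es = E"
    and "f \<ge> 1"
  shows "mfd_certificate V E (ft_greedy_mfd_certificate V E f es) f"
  unfolding ft_greedy_mfd_certificate_def
proof (rule mfd_certificate_if_covered)
  show "foldl (greedy_step V E f) {} es \<subseteq> E"
    using foldl_greedy_step_subset assms(3) by blast
  show "covered V E f (foldl (greedy_step V E f) {} es) e" if "e \<in> E" for e
    using covered_foldl_greedy_step assms(1,3) that by blast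
qed

end
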